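(* Let $G$ be a Frobenius group with cyclic Frobenius kernel $N$ of order $p^a$ and cyclic Frobenius complement $C$ of order $q^m$, where $p,q$ are primes and $a,m\ge 1$. Then $G\in\mathcal{D}_{(a+1)m-1}$.
   Context: $\mathcal{D}(G)$ denotes the number of conjugacy classes of nontrivial subgroups $H$ of the finite group $G$ with $N_G(H)\neq H$; $\mathcal{D}_n$ is the family of finite groups $G$ with $\mathcal{D}(G)=n$. *)

theory Defs
  imports "HOL-Algebra.Algebra"
begin

definition conjugate_set :: "('a, 'b) monoid_scheme \<Rightarrow> 'a \<Rightarrow> 'a set \<Rightarrow> 'a set" where
  "conjugate_set G g H = g <#\<^bsub>G\<^esub> H #>\<^bsub>G\<^esub> inv\<^bsub>G\<^esub> g"

definition frobenius_complement :: "('a, 'b) monoid_scheme \<Rightarrow> 'a set \<Rightarrow> bool" where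
  "frobenius_complement G H \<longleftrightarrow>
     subgroup H G \<and> H \<noteq> {\<one>\<^bsub>G\<^esub>} \<and> H \<noteq> carrier G \<and>
     (\<forall>g \<in> carrier G - H. H \<inter> conjugate_set G g H = {\<one>\<^bsub>G\<^esub>})"

definition frobenius_kernel :: "('a, 'b) monoid_scheme \<Rightarrow> 'a set \<Rightarrow> 'a set" where
  "frobenius_kernel G H =
     (carrier G - (\<Union>g \<in> carrier G. conjugate_set G g H)) \<union> {\<one>\<^bsub>G\<^esub>}"

definition subgroup_conj_class :: "('a, 'b) monoid_scheme \<Rightarrow> 'a set \<Rightarrow> 'a set set" where
  "subgroup_conj_class G H = {conjugate_set G g H | g. g \<in> carrier G}"

definition D_count :: "('a, 'b) monoid_scheme \<Rightarrow> nat" where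
  "D_count G = card (subgroup_conj_class G `
      {H. subgroup H G \<and> H \<noteq> {\<one>\<^bsub>G\<^esub>} \<and> normalizer G H \<noteq> H})"

end

theory Submission
  imports Defs "HOL-Computational_Algebra.Primes"
begin

text \<open>The Frobenius kernel N is a normal subgroup meeting C trivially, and counting the conjugates
  of C gives |G| = |N| |C|; so G = N \<rtimes> C and the projection of G onto C is a homomorphism
  with kernel N. The subgroups of the cyclic groups N and C are the N_i and C_j of orders
  p^i and q^j. A subgroup H meets N in some N_i and projects onto some C_j; a lift in H of
  a generator of C_j lies outside N (unless j = 0), hence in a conjugate of C, and therefore H is
  conjugate to N_i C_j. These subgroups have the distinct orders p^i q^j, since
  p \<noteq> q: C acts fixed-point-freely on N - {1}, so q^m divides p^a - 1.
  Finally N_i C_j is normalized by all of C, hence not self-normalizing, when j < m; while an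
  element of N normalizing N_i C commutes with C modulo N_i, which by fixed-point-freeness forces
  it into N_i. The pairs (i, j) \<noteq> (0, 0) with j < m are (a + 1) m - 1 in number.\<close>

definition torsion :: "('a, 'b) monoid_scheme \<Rightarrow> nat \<Rightarrow> 'a set \<Rightarrow> 'a set" where
  "torsion G n Z = {y \<in> Z. y [^]\<^bsub>G\<^esub> n = \<one>\<^bsub>G\<^esub>}"

lemma torsion_subset: "torsion G n Z \<subseteq> Z"
  unfolding torsion_def by auto

lemma prime_power_product_inj:
  fixes p q :: nat
  assumes "Factorial_Ring.prime p" "Factorial_Ring.prime q" "p \<noteq> q"
    and "p ^ i * q ^ j = p ^ i' * q ^ j'"
  shows "i = i' \<and> j = j'"
proof -
  have mult: "multiplicity p (p ^ k * q ^ l) = k" "multiplicity q (p ^ k * q ^ l) = l" for k l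
    using assms(1-3) prime_gt_0_nat[OF assms(1)] prime_gt_0_nat[OF assms(2)]
    by (simp_all add: prime_elem_multiplicity_mult_distrib multiplicity_distinct_prime_power)
  show ?thesis
    using mult[of i j] mult[of i' j'] assms(4) by metis
qed

context group
begin

lemma inv_m_cancel_left [simp]: "x \<in> carrier G \<Longrightarrow> y \<in> carrier G \<Longrightarrow> inv x \<otimes> (x \<otimes> y) = y"
  by (simp flip: m_assoc)

lemma m_inv_cancel_left [simp]: "x \<in> carrier G \<Longrightarrow> y \<in> carrier G \<Longrightarrow> x \<otimes> (inv x \<otimes> y) = y"
  by (simp flip: m_assoc)

lemma conjugate_set_eq_image: "conjugate_set G g S = (\<lambda>x. g \<otimes> x \<otimes> inv g) ` S"
  unfolding conjugate_set_def l_coset_def r_coset_def by auto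

lemma conjugate_setI: "x \<in> S \<Longrightarrow> g \<otimes> x \<otimes> inv g \<in> conjugate_set G g S"
  by (simp add: conjugate_set_eq_image)

lemma conjugate_setE:
  assumes "y \<in> conjugate_set G g S"
  obtains x where "x \<in> S" "y = g \<otimes> x \<otimes> inv g"
  using assms by (auto simp: conjugate_set_eq_image)

lemma conjugate_set_subset_carrier:
  "g \<in> carrier G \<Longrightarrow> S \<subseteq> carrier G \<Longrightarrow> conjugate_set G g S \<subseteq> carrier G"
  by (auto simp: conjugate_set_eq_image)

lemma conjugate_set_conjugate_set:
  assumes "g \<in> carrier G" "h \<in> carrier G" "S \<subseteq> carrier G"
  shows "conjugate_set G g (conjugate_set G h S) = conjugate_set G (g \<otimes> h) S"
  unfolding conjugate_set_eq_image image_image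
  using assms by (intro image_cong refl) (auto simp: m_assoc inv_mult_group)

lemma conjugate_set_one [simp]: "S \<subseteq> carrier G \<Longrightarrow> conjugate_set G \<one> S = S"
  by (force simp: conjugate_set_eq_image)

lemma conjugate_set_singleton_one [simp]: "g \<in> carrier G \<Longrightarrow> conjugate_set G g {\<one>} = {\<one>}"
  by (simp add: conjugate_set_eq_image)

lemma conjugate_set_inv_cancel:
  "g \<in> carrier G \<Longrightarrow> S \<subseteq> carrier G \<Longrightarrow> conjugate_set G (inv g) (conjugate_set G g S) = S"
  by (simp add: conjugate_set_conjugate_set)

lemma conjugate_set_eq_iff:
  assumes "g \<in> carrier G" "S \<subseteq> carrier G" "T \<subseteq> carrier G"
  shows "conjugate_set G g S = conjugate_set G g T \<longleftrightarrow> S = T"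
  using assms by (metis conjugate_set_inv_cancel)

lemma card_conjugate_set:
  assumes "g \<in> carrier G" "S \<subseteq> carrier G"
  shows "card (conjugate_set G g S) = card S"
  unfolding conjugate_set_eq_image using assms
  by (intro card_image inj_onI) (auto dest: conjugation_is_inj)

lemma conjugate_nat_pow:
  assumes "g \<in> carrier G" "x \<in> carrier G"
  shows "(g \<otimes> x \<otimes> inv g) [^] (n::nat) = g \<otimes> x [^] n \<otimes> inv g"
proof (induction n)
  case (Suc n)
  then show ?case using assms by (simp add: m_assoc)
qed (use assms in simp)

definition conjugation :: "'a \<Rightarrow> 'a \<Rightarrow> 'a" where
  "conjugation g = (\<lambda>h \<in> carrier G. g \<otimes> h \<otimes> inv g)"

lemma group_action_conjugation: "subgroup H G \<Longrightarrow> group_action (G\<lparr>carrier := H\<rparr>) (carrier G) conjugation"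
  unfolding conjugation_def by (rule group_action.induced_action[OF action_by_conjugation])

lemma subgroup_conjugate_set:
  assumes "subgroup H G" "g \<in> carrier G"
  shows "subgroup (conjugate_set G g H) G"
  using group_action.element_image[OF action_by_conjugation_on_subgroups_set, of g H] assms
  by (simp add: conjugate_set_def)

lemma mem_normalizer_iff:
  "H \<subseteq> carrier G \<Longrightarrow> g \<in> normalizer G H \<longleftrightarrow> g \<in> carrier G \<and> conjugate_set G g H = H"
  unfolding normalizer_def stabilizer_def conjugate_set_def by auto

lemma subgroup_subset_normalizer: "subgroup H G \<Longrightarrow> H \<subseteq> normalizer G H"
  using subgroup_in_normalizer[THEN normal_imp_subgroup, THEN subgroup.subset] by simp

lemma normalizer_conjugate_set:
  assumes K: "K \<subseteq> carrier G" and x: "x \<in> carrier G"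
  shows "normalizer G (conjugate_set G x K) = conjugate_set G x (normalizer G K)"
proof -
  have xK: "conjugate_set G x K \<subseteq> carrier G"
    using conjugate_set_subset_carrier[OF x K] .
  have shift: "conjugate_set G (x \<otimes> h \<otimes> inv x) (conjugate_set G x K)
      = conjugate_set G x (conjugate_set G h K)" if "h \<in> carrier G" for h
    using that x K by (simp add: conjugate_set_conjugate_set m_assoc)
  show ?thesis
  proof (rule equalityI; rule subsetI)
    fix g assume "g \<in> normalizer G (conjugate_set G x K)"
    then have g: "g \<in> carrier G" "conjugate_set G g (conjugate_set G x K) = conjugate_set G x K"
      using mem_normalizer_iff[OF xK] by auto
    define h where "h = inv x \<otimes> g \<otimes> x"
    have h: "h \<in> carrier G" "g = x \<otimes> h \<otimes> inv x"
      using g(1) x by (simp_all add: h_def m_assoc)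
    then have "conjugate_set G h K = K"
      using shift[OF h(1)] g(2) conjugate_set_eq_iff[OF x] conjugate_set_subset_carrier[OF h(1) K] K
      by simp
    then show "g \<in> conjugate_set G x (normalizer G K)"
      using h mem_normalizer_iff[OF K] by (simp add: conjugate_setI)
  next
    fix g assume "g \<in> conjugate_set G x (normalizer G K)"
    then obtain h where h: "h \<in> normalizer G K" "g = x \<otimes> h \<otimes> inv x"
      by (rule conjugate_setE)
    then have "h \<in> carrier G" "conjugate_set G h K = K"
      using mem_normalizer_iff[OF K] by auto
    then show "g \<in> normalizer G (conjugate_set G x K)"
      using shift h(2) x mem_normalizer_iff[OF xK] by simp
  qed
qed

lemma self_normalizing_conjugate_set_iff:
  assumes "K \<subseteq> carrier G" "x \<in> carrier G"
  shows "normalizer G (conjugate_set G x K) = conjugate_set G x K \<longleftrightarrow> normalizer G K = K"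
  using assms normalizer_conjugate_set conjugate_set_eq_iff
    normalizer_def group_action.stabilizer_subset[OF action_by_conjugation_on_power_set]
  by (metis)

lemma subgroup_conj_class_conjugate_set:
  assumes K: "K \<subseteq> carrier G" and x: "x \<in> carrier G"
  shows "subgroup_conj_class G (conjugate_set G x K) = subgroup_conj_class G K"
proof (rule equalityI; rule subsetI)
  fix Y assume "Y \<in> subgroup_conj_class G (conjugate_set G x K)"
  then obtain g where "g \<in> carrier G" "Y = conjugate_set G (g \<otimes> x) K"
    unfolding subgroup_conj_class_def using conjugate_set_conjugate_set[OF _ x K] by auto
  then show "Y \<in> subgroup_conj_class G K"
    unfolding subgroup_conj_class_def using x by blast
next
  fix Y assume "Y \<in> subgroup_conj_class G K"
  then obtain g where g: "g \<in> carrier G" "Y = conjugate_set G g K"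
    unfolding subgroup_conj_class_def by auto
  then have "Y = conjugate_set G (g \<otimes> inv x) (conjugate_set G x K)"
    using x K by (simp add: conjugate_set_conjugate_set m_assoc)
  then show "Y \<in> subgroup_conj_class G (conjugate_set G x K)"
    unfolding subgroup_conj_class_def using g(1) x by blast
qed

lemma mem_subgroup_conj_class_self: "K \<subseteq> carrier G \<Longrightarrow> K \<in> subgroup_conj_class G K"
  unfolding subgroup_conj_class_def by (metis (mono_tags, lifting) conjugate_set_one one_closed mem_Collect_eq)

lemma card_eq_if_subgroup_conj_class_eq:
  assumes "K \<subseteq> carrier G" "L \<subseteq> carrier G"
    and "subgroup_conj_class G K = subgroup_conj_class G L"
  shows "card K = card L"
proof -
  obtain g where "g \<in> carrier G" "K = conjugate_set G g L"
    using mem_subgroup_conj_class_self[OF assms(1)] assms(3)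
    unfolding subgroup_conj_class_def by auto
  then show ?thesis using card_conjugate_set assms(2) by simp
qed

lemma subgroup_nat_pow_closed: "subgroup H G \<Longrightarrow> h \<in> H \<Longrightarrow> h [^] (n::nat) \<in> H"
  by (metis int_pow_int subgroup_int_pow_closed)

lemma subgroup_card_dvd:
  assumes "subgroup S G" "subgroup Z G" "S \<subseteq> Z" "finite Z"
  shows "card S dvd card Z"
proof -
  interpret Z: group "G\<lparr>carrier := Z\<rparr>"
    using subgroup.subgroup_is_group[OF assms(2) is_group] .
  have "card (rcosets\<^bsub>G\<lparr>carrier := Z\<rparr>\<^esub> S) * card S = card Z"
    using Z.lagrange subgroup_incl[OF assms(1-3)] by (simp add: order_def)
  then show ?thesis by (metis dvd_triv_right)
qed

lemma pow_card_subgroup_eq_one: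
  assumes "subgroup S G" "finite S" "y \<in> S"
  shows "y [^] card S = \<one>"
proof -
  interpret S: group "G\<lparr>carrier := S\<rparr>"
    using subgroup.subgroup_is_group[OF assms(1) is_group] .
  show ?thesis
    using S.pow_order_eq_1 assms(3) by (simp add: order_def flip: nat_pow_consistent)
qed

text \<open>The predicate cyclic_group does not say that G\<lparr>carrier := H\<rparr> is a group, so only closure
  under multiplication is available; finiteness provides the inverses as powers.\<close>
lemma subgroup_if_cyclic_group:
  assumes fin: "finite (carrier G)" and H: "H \<subseteq> carrier G"
    and cyc: "cyclic_group (G\<lparr>carrier := H\<rparr>)"
  shows "subgroup H G"
proof -
  obtain x where x: "x \<in> H" "subgroup_generated (G\<lparr>carrier := H\<rparr>) {x} = G\<lparr>carrier := H\<rparr>"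
    using cyc unfolding cyclic_group_def by auto
  have "carrier (subgroup_generated (G\<lparr>carrier := H\<rparr>) {x}) = H"
    using x(2) by simp
  then have gen: "generate (G\<lparr>carrier := H\<rparr>) {x} = H"
    using x(1) by (simp add: carrier_subgroup_generated Int_absorb1)
  have one: "\<one> \<in> H"
    using generate.one[of "G\<lparr>carrier := H\<rparr>" "{x}"] gen by simp
  have mult: "u \<otimes> v \<in> H" if "u \<in> H" "v \<in> H" for u v
    using generate.eng[of u "G\<lparr>carrier := H\<rparr>" "{x}" v] that gen by simp
  have "inv u \<in> H" if u: "u \<in> H" for u
  proof -
    have uc: "u \<in> carrier G" using u H by blast
    have pow: "u [^] n \<in> H" for n :: nat
      by (induction n) (simp_all add: one mult u)
    have "Suc (ord u - 1) = ord u"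
      using ord_ge_1[OF fin uc] by simp
    then have "u [^] (ord u - 1) \<otimes> u = \<one>"
      using uc by (metis nat_pow_Suc pow_ord_eq_1)
    then have "inv u = u [^] (ord u - 1)"
      using uc by (simp add: inv_equality)
    then show ?thesis using pow by simp
  qed
  then show ?thesis
    using one mult H by (intro subgroupI) auto
qed

lemma normal_torsion:
  assumes Z: "Z \<lhd> G" and sub: "subgroup (torsion G n Z) G"
  shows "torsion G n Z \<lhd> G"
proof (rule normal_invI[OF sub])
  fix g y assume g: "g \<in> carrier G" and y: "y \<in> torsion G n Z"
  then have yZ: "y \<in> Z" and yn: "y [^] n = \<one>"
    unfolding torsion_def by auto
  have yc: "y \<in> carrier G"
    using yZ Z normal_imp_subgroup subgroup.subset by blast
  have "g \<otimes> y \<otimes> inv g \<in> Z"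
    using normal.inv_op_closed2[OF Z g yZ] .
  moreover have "(g \<otimes> y \<otimes> inv g) [^] n = \<one>"
    using conjugate_nat_pow[OF g yc] yn g by simp
  ultimately show "g \<otimes> y \<otimes> inv g \<in> torsion G n Z"
    unfolding torsion_def by simp
qed

end

locale cyclic_prime_power_subgroup = group G for G (structure) +
  fixes Z :: "'a set" and r e :: nat
  assumes finite_carrier: "finite (carrier G)"
    and subgroup_Z: "subgroup Z G" and cyclic_Z: "cyclic_group (G\<lparr>carrier := Z\<rparr>)"
    and card_Z: "card Z = r ^ e" and prime_r: "Factorial_Ring.prime r"
begin

lemma Z_subset_carrier: "Z \<subseteq> carrier G"
  using subgroup_Z subgroup.subset by blast

lemma generator:
  obtains z where "z \<in> Z" "generate G {z} = Z" "ord z = r ^ e"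
proof -
  interpret Z: group "G\<lparr>carrier := Z\<rparr>"
    using subgroup.subgroup_is_group[OF subgroup_Z is_group] .
  obtain z where z: "z \<in> Z" "Z = range (\<lambda>n::int. z [^]\<^bsub>G\<lparr>carrier := Z\<rparr>\<^esub> n)"
    using cyclic_Z Z.cyclic_group by auto
  have zc: "z \<in> carrier G"
    using z(1) Z_subset_carrier by blast
  have "Z = range (\<lambda>n::int. z [^] n)"
    using z int_pow_consistent[OF subgroup_Z z(1)] by simp
  then have "generate G {z} = Z"
    using generate_pow[OF zc] by auto
  moreover have "ord z = card (generate G {z})"
    using generate_pow_card[OF zc] .
  ultimately show ?thesis
    using that z(1) card_Z by auto
qed

lemma comm: "x \<in> Z \<Longrightarrow> y \<in> Z \<Longrightarrow> x \<otimes> y = y \<otimes> x"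
proof -
  assume xy: "x \<in> Z" "y \<in> Z"
  obtain z where z: "z \<in> Z" "generate G {z} = Z" by (rule generator)
  have zc: "z \<in> carrier G"
    using z(1) Z_subset_carrier by blast
  obtain i j :: nat where "x = z [^] i" "y = z [^] j"
    using xy generate_pow_on_finite_carrier[OF finite_carrier zc] z(2) by auto
  then show ?thesis
    using zc by (simp add: nat_pow_mult add.commute)
qed

lemma torsion_eq_generate:
  assumes de: "d \<le> e"
  shows "\<exists>w\<in>Z. torsion G (r ^ d) Z = generate G {w} \<and> ord w = r ^ d"
proof -
  obtain z where z: "z \<in> Z" "generate G {z} = Z" "ord z = r ^ e" by (rule generator)
  have zc: "z \<in> carrier G"
    using z(1) Z_subset_carrier by blast
  have r: "0 < r"
    using prime_gt_0_nat[OF prime_r] .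
  have split: "r ^ e = r ^ (e - d) * r ^ d"
    using de by (simp flip: power_add)
  define w where "w = z [^] r ^ (e - d)"
  have wc: "w \<in> carrier G"
    unfolding w_def using zc by simp
  have w: "w \<in> Z"
    unfolding w_def using subgroup_nat_pow_closed[OF subgroup_Z z(1)] .
  have ord_w: "ord w = r ^ d"
    unfolding w_def using ord_pow[OF zc] z(3) split r by simp
  have Z_pow: "Z = {z [^] k | k. k \<in> (UNIV :: nat set)}"
    using generate_pow_on_finite_carrier[OF finite_carrier zc] z(2) by simp
  have w_pow: "generate G {w} = {w [^] k | k. k \<in> (UNIV :: nat set)}"
    using generate_pow_on_finite_carrier[OF finite_carrier wc] .
  have "torsion G (r ^ d) Z = generate G {w}"
  proof (rule equalityI; rule subsetI)
    fix y assume "y \<in> torsion G (r ^ d) Z"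
    then obtain k :: nat where k: "y = z [^] k" and y: "y [^] r ^ d = \<one>"
      unfolding torsion_def using Z_pow by auto
    have "z [^] (k * r ^ d) = \<one>"
      using y k zc by (simp add: nat_pow_pow)
    then have "r ^ (e - d) * r ^ d dvd k * r ^ d"
      using pow_eq_id[OF zc] z(3) split by simp
    then obtain t where "k = r ^ (e - d) * t"
      using r by auto
    then have "y = w [^] t"
      using k zc by (simp add: w_def nat_pow_pow)
    then show "y \<in> generate G {w}"
      using w_pow by auto
  next
    fix y assume "y \<in> generate G {w}"
    then obtain t :: nat where t: "y = w [^] t"
      using w_pow by auto
    have "y [^] r ^ d = (w [^] r ^ d) [^] t"
      using t wc by (simp add: nat_pow_pow mult.commute)
    also have "\<dots> = \<one>"
      using pow_ord_eq_1[OF wc] ord_w by simp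
    finally show "y \<in> torsion G (r ^ d) Z"
      unfolding torsion_def using t subgroup_nat_pow_closed[OF subgroup_Z w] by simp
  qed
  then show ?thesis
    using w ord_w by blast
qed

lemma subgroup_torsion:
  assumes "d \<le> e"
  shows "subgroup (torsion G (r ^ d) Z) G"
proof -
  obtain w where "w \<in> Z" "torsion G (r ^ d) Z = generate G {w}"
    using torsion_eq_generate[OF assms] by blast
  then show ?thesis
    using generate_is_subgroup[of "{w}"] Z_subset_carrier by auto
qed

lemma card_torsion:
  assumes "d \<le> e"
  shows "card (torsion G (r ^ d) Z) = r ^ d"
  using torsion_eq_generate[OF assms] generate_pow_card Z_subset_carrier by (metis subsetD)

lemma subgroup_eq_torsion:
  assumes S: "subgroup S G" "S \<subseteq> Z"
  shows "\<exists>d\<le>e. S = torsion G (r ^ d) Z"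
proof -
  have finZ: "finite Z"
    using finite_carrier Z_subset_carrier finite_subset by blast
  then have finS: "finite S"
    using S(2) finite_subset by blast
  have "card S dvd r ^ e"
    using subgroup_card_dvd[OF S(1) subgroup_Z S(2) finZ] card_Z by simp
  then obtain d where d: "d \<le> e" "card S = r ^ d"
    using divides_primepow_nat[OF prime_r] by blast
  have "S \<subseteq> torsion G (r ^ d) Z"
    using pow_card_subgroup_eq_one[OF S(1) finS] d S(2) unfolding torsion_def by auto
  moreover have "card S = card (torsion G (r ^ d) Z)"
    using card_torsion[OF d(1)] d by simp
  ultimately have "S = torsion G (r ^ d) Z"
    using card_subset_eq[OF finite_subset[OF torsion_subset finZ]] by blast
  then show ?thesis
    using d by blast
qed

lemma subgroup_eq_generate:
  assumes "subgroup S G" "S \<subseteq> Z"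
  shows "\<exists>w\<in>S. S = generate G {w}"
proof -
  obtain d where "d \<le> e" "S = torsion G (r ^ d) Z"
    using subgroup_eq_torsion[OF assms] by blast
  then obtain w where "S = generate G {w}"
    using torsion_eq_generate by blast
  moreover have "w \<in> generate G {w}"
    by (rule generate.incl) simp
  ultimately show ?thesis by blast
qed

lemma torsion_top: "torsion G (r ^ e) Z = Z"
proof -
  have finZ: "finite Z"
    using finite_subset[OF Z_subset_carrier finite_carrier] .
  have "y [^] r ^ e = \<one>" if "y \<in> Z" for y
    using pow_card_subgroup_eq_one[OF subgroup_Z finZ that] unfolding card_Z .
  then show ?thesis
    unfolding torsion_def by blast
qed

end

locale frobenius_group = group G for G (structure) +
  fixes C N :: "'a set"
  assumes finite_carrier: "finite (carrier G)"
    and frobenius_complement: "frobenius_complement G C"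
    and kernel_eq: "N = frobenius_kernel G C"
    and subgroup_kernel: "subgroup N G"
begin

lemma subgroup_complement: "subgroup C G"
  and complement_nontrivial: "C \<noteq> {\<one>}"
  and complement_Int_conjugate: "g \<in> carrier G \<Longrightarrow> g \<notin> C \<Longrightarrow> C \<inter> conjugate_set G g C = {\<one>}"
  using frobenius_complement unfolding frobenius_complement_def by auto

lemma complement_subset_carrier: "C \<subseteq> carrier G"
  using subgroup_complement subgroup.subset by blast

lemma kernel_subset_carrier: "N \<subseteq> carrier G"
  using subgroup_kernel subgroup.subset by blast

lemma mem_kernel_iff:
  "x \<in> N \<longleftrightarrow> x \<in> carrier G \<and> (x = \<one> \<or> (\<forall>g\<in>carrier G. x \<notin> conjugate_set G g C))"
  unfolding kernel_eq frobenius_kernel_def by auto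

lemma normal_kernel: "N \<lhd> G"
proof (rule normal_invI[OF subgroup_kernel])
  fix x h assume x: "x \<in> carrier G" and h: "h \<in> N"
  have hc: "h \<in> carrier G"
    using h kernel_subset_carrier by blast
  show "x \<otimes> h \<otimes> inv x \<in> N"
  proof (rule ccontr)
    assume out: "x \<otimes> h \<otimes> inv x \<notin> N"
    then have "h \<noteq> \<one>"
      using x subgroup.one_closed[OF subgroup_kernel] by auto
    obtain g where g: "g \<in> carrier G" "x \<otimes> h \<otimes> inv x \<in> conjugate_set G g C"
      using out x hc mem_kernel_iff by auto
    then have "inv x \<otimes> (x \<otimes> h \<otimes> inv x) \<otimes> inv (inv x) \<in> conjugate_set G (inv x \<otimes> g) C"
      using conjugate_setI conjugate_set_conjugate_set[OF inv_closed[OF x] g(1) complement_subset_carrier]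
      by metis
    then have "h \<in> conjugate_set G (inv x \<otimes> g) C"
      using x hc by (simp add: m_assoc)
    then show False
      using h \<open>h \<noteq> \<one>\<close> g(1) x mem_kernel_iff by auto
  qed
qed

lemma kernel_Int_complement: "N \<inter> C = {\<one>}"
proof -
  have "x = \<one>" if "x \<in> N" "x \<in> C" for x
  proof -
    have "x \<in> conjugate_set G \<one> C"
      using that(2) complement_subset_carrier by simp
    then show ?thesis
      using that(1) mem_kernel_iff by blast
  qed
  then show ?thesis
    using subgroup.one_closed[OF subgroup_kernel] subgroup.one_closed[OF subgroup_complement]
    by blast
qed

lemma normalizer_complement: "normalizer G C = C"
proof
  show "normalizer G C \<subseteq> C"
  proof
    fix g assume "g \<in> normalizer G C"
    then have "g \<in> carrier G" "conjugate_set G g C = C"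
      using mem_normalizer_iff[OF complement_subset_carrier] by auto
    then show "g \<in> C"
      using complement_Int_conjugate complement_nontrivial by force
  qed
qed (rule subgroup_subset_normalizer[OF subgroup_complement])

lemma conjugate_complement_eq:
  assumes g: "g \<in> carrier G" and h: "h \<in> carrier G" and w: "w \<noteq> \<one>"
    and wg: "w \<in> conjugate_set G g C" and wh: "w \<in> conjugate_set G h C"
  shows "conjugate_set G g C = conjugate_set G h C"
proof -
  define k where "k = inv g \<otimes> h"
  have k: "k \<in> carrier G"
    unfolding k_def using g h by simp
  have wc: "w \<in> carrier G"
    using wg conjugate_set_subset_carrier[OF g complement_subset_carrier] by blast
  let ?v = "inv g \<otimes> w \<otimes> inv (inv g)"
  have "?v \<in> conjugate_set G (inv g) (conjugate_set G g C)"
    using wg by (rule conjugate_setI)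
  then have vC: "?v \<in> C"
    using conjugate_set_inv_cancel[OF g complement_subset_carrier] by simp
  have "?v \<in> conjugate_set G (inv g) (conjugate_set G h C)"
    using wh by (rule conjugate_setI)
  then have vk: "?v \<in> conjugate_set G k C"
    using conjugate_set_conjugate_set[OF inv_closed[OF g] h complement_subset_carrier]
    by (simp add: k_def)
  have "g \<otimes> ?v \<otimes> inv g = w"
    using g wc by (simp add: m_assoc)
  then have "?v \<noteq> \<one>"
    using w g by auto
  then have "k \<in> C"
    using complement_Int_conjugate[OF k] vC vk by blast
  then have "conjugate_set G k C = C"
    using normalizer_complement mem_normalizer_iff[OF complement_subset_carrier] by blast
  moreover have "h = g \<otimes> k"
    unfolding k_def using g h by simp
  ultimately show ?thesis
    using conjugate_set_conjugate_set[OF g k complement_subset_carrier] by simp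
qed

lemma card_conj_class_complement:
  "card (subgroup_conj_class G C) * card C = card (carrier G)"
proof -
  interpret A: group_action G "{H. H \<subseteq> carrier G}" "\<lambda>g. \<lambda>H \<in> {H. H \<subseteq> carrier G}. g <# H #> inv g"
    using action_by_conjugation_on_power_set .
  have "orbit G (\<lambda>g. \<lambda>H\<in>{H. H \<subseteq> carrier G}. g <# H #> inv g) C = subgroup_conj_class G C"
    unfolding orbit_def subgroup_conj_class_def conjugate_set_def
    using complement_subset_carrier by auto
  moreover have "stabilizer G (\<lambda>g. \<lambda>H\<in>{H. H \<subseteq> carrier G}. g <# H #> inv g) C = C"
    using normalizer_complement unfolding normalizer_def .
  ultimately show ?thesis
    using A.orbit_stabilizer_theorem[of C] complement_subset_carrier by (simp add: order_def)
qed

lemma carrier_diff_kernel: "carrier G - N = (\<Union>T \<in> subgroup_conj_class G C. T - {\<one>})"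
proof (rule equalityI; rule subsetI)
  fix x assume "x \<in> carrier G - N"
  then obtain g where "g \<in> carrier G" "x \<in> conjugate_set G g C" "x \<noteq> \<one>"
    using mem_kernel_iff by auto
  then show "x \<in> (\<Union>T \<in> subgroup_conj_class G C. T - {\<one>})"
    unfolding subgroup_conj_class_def by blast
next
  fix x assume "x \<in> (\<Union>T \<in> subgroup_conj_class G C. T - {\<one>})"
  then obtain g where g: "g \<in> carrier G" "x \<in> conjugate_set G g C" "x \<noteq> \<one>"
    unfolding subgroup_conj_class_def by blast
  then have "x \<in> carrier G"
    using conjugate_set_subset_carrier[OF g(1) complement_subset_carrier] by blast
  then show "x \<in> carrier G - N"
    using g mem_kernel_iff by blast
qed

lemma card_carrier_diff_kernel:
  "card (carrier G - N) = (card C - 1) * card (subgroup_conj_class G C)"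
proof -
  define CS where "CS = subgroup_conj_class G C"
  have CS: "subgroup T G" "card T = card C" if "T \<in> CS" for T
    using that subgroup_conjugate_set[OF subgroup_complement] card_conjugate_set complement_subset_carrier
    unfolding CS_def subgroup_conj_class_def by auto
  have CS_carrier: "T \<subseteq> carrier G" if "T \<in> CS" for T
    using CS(1)[OF that] subgroup.subset by blast
  let ?F = "(\<lambda>T. T - {\<one>}) ` CS"
  have "(card C - 1) * card ?F = card (\<Union> ?F)"
  proof (rule card_partition)
    have "finite CS"
      using CS_carrier finite_subset[of CS "Pow (carrier G)"] finite_carrier by blast
    then show "finite ?F"
      by (rule finite_imageI)
    have "\<Union> ?F \<subseteq> carrier G"
      using CS_carrier by blast
    then show "finite (\<Union> ?F)"
      using finite_carrier by (rule finite_subset)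
    show "card Y = card C - 1" if Y: "Y \<in> ?F" for Y
    proof -
      obtain T where T: "T \<in> CS" "Y = T - {\<one>}"
        using Y by blast
      have "finite T"
        using CS_carrier[OF T(1)] finite_carrier by (rule finite_subset)
      then show ?thesis
        using T CS[OF T(1)] subgroup.one_closed[OF CS(1)[OF T(1)]] by simp
    qed
    show "Y1 \<inter> Y2 = {}" if Y: "Y1 \<in> ?F" "Y2 \<in> ?F" "Y1 \<noteq> Y2" for Y1 Y2
    proof (rule ccontr)
      assume "Y1 \<inter> Y2 \<noteq> {}"
      then obtain g h w where "g \<in> carrier G" "h \<in> carrier G" "w \<noteq> \<one>"
        "w \<in> conjugate_set G g C" "w \<in> conjugate_set G h C"
        "Y1 = conjugate_set G g C - {\<one>}" "Y2 = conjugate_set G h C - {\<one>}"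
        using Y(1,2) unfolding CS_def subgroup_conj_class_def by blast
      then show False
        using Y(3) conjugate_complement_eq by metis
    qed
  qed
  moreover have "\<Union> ?F = carrier G - N"
    unfolding carrier_diff_kernel CS_def by blast
  moreover have "card ?F = card CS"
  proof (rule card_image, rule inj_onI)
    fix T1 T2 assume "T1 \<in> CS" "T2 \<in> CS" "T1 - {\<one>} = T2 - {\<one>}"
    then show "T1 = T2"
      using CS(1) subgroup.one_closed by (metis insert_Diff)
  qed
  ultimately show ?thesis
    unfolding CS_def by simp
qed

lemma card_carrier: "card (carrier G) = card N * card C"
proof -
  define k where "k = card (subgroup_conj_class G C)"
  have k: "k * card C = card (carrier G)"
    unfolding k_def by (rule card_conj_class_complement)
  have "card (carrier G) - card N = (card C - 1) * k"
    using card_carrier_diff_kernel kernel_subset_carrier finite_carrier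
    by (simp add: k_def card_Diff_subset finite_subset)
  also have "\<dots> = card (carrier G) - k"
    unfolding diff_mult_distrib using k by (simp add: mult.commute)
  finally have "card (carrier G) - card N = card (carrier G) - k" .
  moreover have "card N \<le> card (carrier G)"
    using kernel_subset_carrier finite_carrier by (simp add: card_mono)
  moreover have "k \<le> card (carrier G)"
  proof -
    have "1 \<le> card C"
      using subgroup.finite_imp_card_positive[OF subgroup_complement finite_carrier] by simp
    then have "k * 1 \<le> k * card C"
      by (rule mult_le_mono2)
    then show ?thesis
      using k by simp
  qed
  ultimately have "card N = k"
    by linarith
  then show ?thesis
    using k by simp
qed

lemma kernel_complement_unique:
  assumes n: "n \<in> N" "n' \<in> N" and c: "c \<in> C" "c' \<in> C" and eq: "n \<otimes> c = n' \<otimes> c'"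
  shows "n = n' \<and> c = c'"
proof -
  have car: "n \<in> carrier G" "n' \<in> carrier G" "c \<in> carrier G" "c' \<in> carrier G"
    using n c kernel_subset_carrier complement_subset_carrier by auto
  have "n = n' \<otimes> c' \<otimes> inv c"
    using inv_solve_right[of n "n' \<otimes> c'" c] eq car by simp
  then have "inv n' \<otimes> n = c' \<otimes> inv c"
    using car by (simp add: m_assoc)
  moreover have "inv n' \<otimes> n \<in> N" "c' \<otimes> inv c \<in> C"
    using n c subgroup_kernel subgroup_complement by (simp_all add: subgroup.m_closed subgroup.m_inv_closed)
  ultimately have "inv n' \<otimes> n = \<one>"
    using kernel_Int_complement by auto
  then have "n = n'"
    using inv_solve_left'[of \<one> n' n] car by simp
  moreover have "c = c'"
    using eq car l_cancel[of n' c c'] \<open>n = n'\<close> by simp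
  ultimately show ?thesis by simp
qed

lemma kernel_complement_decomposition:
  assumes "g \<in> carrier G"
  shows "\<exists>n\<in>N. \<exists>c\<in>C. g = n \<otimes> c"
proof -
  let ?f = "\<lambda>(n, c). n \<otimes> c"
  have "inj_on ?f (N \<times> C)"
  proof (rule inj_onI)
    fix x y assume "x \<in> N \<times> C" "y \<in> N \<times> C" "?f x = ?f y"
    then show "x = y"
      using kernel_complement_unique by (cases x, cases y) (simp, blast)
  qed
  then have "card (?f ` (N \<times> C)) = card (carrier G)"
    using card_carrier by (simp add: card_image card_cartesian_product)
  moreover have "?f ` (N \<times> C) \<subseteq> carrier G"
    using kernel_subset_carrier complement_subset_carrier by auto
  ultimately have "?f ` (N \<times> C) = carrier G"
    using card_subset_eq[OF finite_carrier] by blast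
  then obtain x where "x \<in> N \<times> C" "g = ?f x"
    using assms by (metis imageE)
  then show ?thesis
    by (cases x) auto
qed

definition projection :: "'a \<Rightarrow> 'a" where
  "projection g = (THE c. c \<in> C \<and> (\<exists>n\<in>N. g = n \<otimes> c))"

lemma projection_eq: "n \<in> N \<Longrightarrow> c \<in> C \<Longrightarrow> projection (n \<otimes> c) = c"
  unfolding projection_def by (rule the_equality) (use kernel_complement_unique in blast)+

lemma projection_in: "g \<in> carrier G \<Longrightarrow> projection g \<in> C"
  using kernel_complement_decomposition projection_eq by force

lemma projection_kernel: "n \<in> N \<Longrightarrow> projection n = \<one>"
  using projection_eq[of n \<one>] subgroup.one_closed[OF subgroup_complement] kernel_subset_carrier
  by auto

lemma projection_complement: "c \<in> C \<Longrightarrow> projection c = c"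
  using projection_eq[of \<one> c] subgroup.one_closed[OF subgroup_kernel] complement_subset_carrier
  by auto

lemma projection_mult:
  assumes g: "g \<in> carrier G" and h: "h \<in> carrier G"
  shows "projection (g \<otimes> h) = projection g \<otimes> projection h"
proof -
  obtain n c where nc: "n \<in> N" "c \<in> C" "g = n \<otimes> c"
    using kernel_complement_decomposition[OF g] by blast
  obtain n' c' where nc': "n' \<in> N" "c' \<in> C" "h = n' \<otimes> c'"
    using kernel_complement_decomposition[OF h] by blast
  have car: "n \<in> carrier G" "c \<in> carrier G" "n' \<in> carrier G" "c' \<in> carrier G"
    using nc nc' kernel_subset_carrier complement_subset_carrier by auto
  have "g \<otimes> h = (n \<otimes> (c \<otimes> n' \<otimes> inv c)) \<otimes> (c \<otimes> c')"
    using nc nc' car by (simp add: m_assoc)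
  moreover have "n \<otimes> (c \<otimes> n' \<otimes> inv c) \<in> N"
    using normal.inv_op_closed2[OF normal_kernel car(2) nc'(1)] nc(1) subgroup_kernel
    by (simp add: subgroup.m_closed)
  moreover have "c \<otimes> c' \<in> C"
    using nc nc' subgroup_complement by (simp add: subgroup.m_closed)
  ultimately show ?thesis
    using nc nc' projection_eq by simp
qed

lemma hom_projection: "group_hom G (G\<lparr>carrier := C\<rparr>) projection"
proof -
  have "projection \<in> hom G (G\<lparr>carrier := C\<rparr>)"
    using projection_in projection_mult by (intro homI) auto
  then show ?thesis
    using subgroup.subgroup_is_group[OF subgroup_complement is_group]
    by (simp add: group_hom_def group_hom_axioms_def)
qed

lemma subgroup_projection_image:
  assumes "subgroup H G"
  shows "subgroup (projection ` H) G"
  using incl_subgroup[OF subgroup_complement group_hom.subgroup_img_is_subgroup[OF hom_projection assms]] .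

lemma projection_image_subset:
  assumes "subgroup H G"
  shows "projection ` H \<subseteq> C"
  by (rule image_subsetI) (use projection_in subgroup.subset[OF assms] in blast)

lemma projection_inv:
  assumes "g \<in> carrier G"
  shows "projection (inv g) = inv (projection g)"
  using group_hom.hom_inv[OF hom_projection assms]
    m_inv_consistent[OF subgroup_complement projection_in[OF assms]]
  by (rule trans)

lemma projection_eq_one_iff:
  assumes "g \<in> carrier G"
  shows "projection g = \<one> \<longleftrightarrow> g \<in> N"
proof
  assume "projection g = \<one>"
  moreover obtain n c where "n \<in> N" "c \<in> C" "g = n \<otimes> c"
    using kernel_complement_decomposition[OF assms] by blast
  ultimately show "g \<in> N"
    using projection_eq kernel_subset_carrier by auto
qed (rule projection_kernel)

lemma fixed_point_free:
  assumes c: "c \<in> C" and x: "x \<in> N" "x \<noteq> \<one>" and comm: "c \<otimes> x = x \<otimes> c"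
  shows "c = \<one>"
proof -
  have car: "x \<in> carrier G" "c \<in> carrier G"
    using x c kernel_subset_carrier complement_subset_carrier by auto
  have "x \<notin> C"
    using x kernel_Int_complement by blast
  moreover have "c = x \<otimes> c \<otimes> inv x"
    using car by (simp flip: comm add: m_assoc)
  then have "c \<in> conjugate_set G x C"
    using c conjugate_setI by metis
  ultimately show ?thesis
    using complement_Int_conjugate[OF car(1)] c by blast
qed

abbreviation complement_orbit :: "'a \<Rightarrow> 'a set" where
  "complement_orbit x \<equiv> orbit (G\<lparr>carrier := C\<rparr>) conjugation x"

lemma complement_orbit_eq: "x \<in> carrier G \<Longrightarrow> complement_orbit x = (\<lambda>c. c \<otimes> x \<otimes> inv c) ` C"
  unfolding orbit_def conjugation_def by auto

lemma complement_orbit_subset: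
  assumes x: "x \<in> N - {\<one>}"
  shows "complement_orbit x \<subseteq> N - {\<one>}"
proof
  fix y assume y: "y \<in> complement_orbit x"
  have xc: "x \<in> carrier G"
    using x kernel_subset_carrier by blast
  then obtain c where c: "c \<in> C" "y = c \<otimes> x \<otimes> inv c"
    using y complement_orbit_eq by blast
  have cc: "c \<in> carrier G"
    using c complement_subset_carrier by blast
  have "x = inv c \<otimes> y \<otimes> c"
    using c(2) cc xc by (simp add: m_assoc)
  then have "y \<noteq> \<one>"
    using x cc by auto
  moreover have "y \<in> N"
    using normal.inv_op_closed2[OF normal_kernel cc] x c(2) by simp
  ultimately show "y \<in> N - {\<one>}"
    by blast
qed

lemma card_complement_orbit:
  assumes x: "x \<in> N - {\<one>}"
  shows "card (complement_orbit x) = card C"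
proof -
  interpret A: group_action "G\<lparr>carrier := C\<rparr>" "carrier G" conjugation
    using group_action_conjugation[OF subgroup_complement] .
  have xc: "x \<in> carrier G"
    using x kernel_subset_carrier by auto
  have fixes_x: "c = \<one>" if c: "c \<in> C" "c \<otimes> x \<otimes> inv c = x" for c
  proof -
    have "c \<in> carrier G"
      using c(1) complement_subset_carrier by blast
    then have "c \<otimes> x = x \<otimes> c"
      using inv_solve_right'[of x "c \<otimes> x" c] c(2) xc by simp
    then show ?thesis
      using fixed_point_free[OF c(1)] x by blast
  qed
  have "stabilizer (G\<lparr>carrier := C\<rparr>) conjugation x = {c \<in> C. c \<otimes> x \<otimes> inv c = x}"
    unfolding stabilizer_def conjugation_def using xc by simp
  also have "\<dots> = {\<one>}"
  proof
    show "{c \<in> C. c \<otimes> x \<otimes> inv c = x} \<subseteq> {\<one>}"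
      using fixes_x by blast
    show "{\<one>} \<subseteq> {c \<in> C. c \<otimes> x \<otimes> inv c = x}"
      using subgroup.one_closed[OF subgroup_complement] xc by simp
  qed
  finally show ?thesis
    using A.orbit_stabilizer_theorem[OF xc] by (simp add: order_def)
qed

lemma card_complement_dvd_card_kernel: "card C dvd card N - 1"
proof -
  interpret A: group_action "G\<lparr>carrier := C\<rparr>" "carrier G" conjugation
    using group_action_conjugation[OF subgroup_complement] .
  let ?F = "complement_orbit ` (N - {\<one>})"
  have "card C * card ?F = card (\<Union> ?F)"
  proof (rule card_partition)
    have "finite N"
      using kernel_subset_carrier finite_carrier by (rule finite_subset)
    then show "finite ?F"
      by simp
    have "\<Union> ?F \<subseteq> carrier G"
      using complement_orbit_subset kernel_subset_carrier by blast
    then show "finite (\<Union> ?F)"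
      using finite_carrier by (rule finite_subset)
    show "card Y = card C" if "Y \<in> ?F" for Y
      using that card_complement_orbit by blast
    show "Y1 \<inter> Y2 = {}" if "Y1 \<in> ?F" "Y2 \<in> ?F" "Y1 \<noteq> Y2" for Y1 Y2
      using that A.disjoint_union kernel_subset_carrier unfolding orbits_def by blast
  qed
  moreover have "\<Union> ?F = N - {\<one>}"
    using complement_orbit_subset A.orbit_refl kernel_subset_carrier by blast
  ultimately have "card C * card ?F = card N - 1"
    using subgroup.one_closed[OF subgroup_kernel] by simp
  then show ?thesis
    by (metis dvd_triv_left)
qed

end

locale cyclic_frobenius = frobenius_group +
  fixes p q a m :: nat
  assumes cyclic_kernel: "cyclic_group (G\<lparr>carrier := N\<rparr>)" and card_kernel: "card N = p ^ a"
    and cyclic_complement: "cyclic_group (G\<lparr>carrier := C\<rparr>)" and card_complement: "card C = q ^ m"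
    and prime_p: "Factorial_Ring.prime p" and prime_q: "Factorial_Ring.prime q"
    and a_pos: "1 \<le> a" and m_pos: "1 \<le> m"
begin

sublocale kernel: cyclic_prime_power_subgroup G N p a
  by (intro cyclic_prime_power_subgroup.intro cyclic_prime_power_subgroup_axioms.intro is_group
      finite_carrier subgroup_kernel cyclic_kernel card_kernel prime_p)

sublocale complement: cyclic_prime_power_subgroup G C q m
  by (intro cyclic_prime_power_subgroup.intro cyclic_prime_power_subgroup_axioms.intro is_group
      finite_carrier subgroup_complement cyclic_complement card_complement prime_q)

lemma primes_distinct: "p \<noteq> q"
proof
  assume "p = q"
  then have "p dvd card C"
    using card_complement m_pos by simp
  then have "p dvd p ^ a - 1"
    using card_complement_dvd_card_kernel card_kernel dvd_trans by metis
  moreover have "p dvd p ^ a"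
    using a_pos by simp
  ultimately have "p dvd p ^ a - (p ^ a - 1)"
    by (rule dvd_diff_nat[rotated])
  moreover have "p ^ a - (p ^ a - 1) = 1"
    using prime_gt_0_nat[OF prime_p] by simp
  ultimately show False
    using prime_p by simp
qed

lemma normal_kernel_torsion: "i \<le> a \<Longrightarrow> torsion G (p ^ i) N \<lhd> G"
  using normal_torsion[OF normal_kernel kernel.subgroup_torsion] .

lemma projection_conjugate:
  assumes x: "x \<in> carrier G" and c: "c \<in> C"
  shows "projection (x \<otimes> c \<otimes> inv x) = c"
proof -
  have car: "c \<in> carrier G" "projection x \<in> C" "projection x \<in> carrier G"
    using c x projection_in complement_subset_carrier by auto
  have "projection (x \<otimes> c \<otimes> inv x) = projection x \<otimes> c \<otimes> inv (projection x)"
    using x car(1) by (simp add: projection_mult projection_inv projection_complement[OF c])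
  also have "\<dots> = c \<otimes> projection x \<otimes> inv (projection x)"
    using complement.comm[OF car(2) c] by simp
  also have "\<dots> = c"
    using car by (simp add: m_assoc)
  finally show ?thesis .
qed

text \<open>N_i C_j, where N_i and C_j are the subgroups of N and C of orders p^i and q^j.\<close>
definition standard_subgroup :: "nat \<Rightarrow> nat \<Rightarrow> 'a set" where
  "standard_subgroup i j = torsion G (p ^ i) N <#> torsion G (q ^ j) C"

lemma mem_standard_subgroup:
  "x \<in> standard_subgroup i j \<longleftrightarrow> (\<exists>n\<in>torsion G (p ^ i) N. \<exists>c\<in>torsion G (q ^ j) C. x = n \<otimes> c)"
  unfolding standard_subgroup_def set_mult_def by auto

lemma standard_subgroup_subset_carrier: "standard_subgroup i j \<subseteq> carrier G"
  unfolding standard_subgroup_def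
  using setmult_subset_G[OF subset_trans[OF torsion_subset kernel_subset_carrier]
      subset_trans[OF torsion_subset complement_subset_carrier]] .

lemma subgroup_standard_subgroup: "i \<le> a \<Longrightarrow> j \<le> m \<Longrightarrow> subgroup (standard_subgroup i j) G"
  unfolding standard_subgroup_def
  using mult_norm_subgroup[OF normal_kernel_torsion complement.subgroup_torsion] .

lemma card_standard_subgroup:
  assumes "i \<le> a" "j \<le> m"
  shows "card (standard_subgroup i j) = p ^ i * q ^ j"
proof -
  let ?f = "\<lambda>(n, c). n \<otimes> c"
  have "standard_subgroup i j = ?f ` (torsion G (p ^ i) N \<times> torsion G (q ^ j) C)"
    unfolding standard_subgroup_def set_mult_def by auto
  moreover have "inj_on ?f (torsion G (p ^ i) N \<times> torsion G (q ^ j) C)"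
  proof (rule inj_onI)
    fix x y assume "x \<in> torsion G (p ^ i) N \<times> torsion G (q ^ j) C"
      "y \<in> torsion G (p ^ i) N \<times> torsion G (q ^ j) C" "?f x = ?f y"
    then show "x = y"
      using kernel_complement_unique torsion_subset[of G "p ^ i" N] torsion_subset[of G "q ^ j" C]
      by (cases x, cases y) (simp, blast)
  qed
  ultimately show ?thesis
    using kernel.card_torsion[OF assms(1)] complement.card_torsion[OF assms(2)]
    by (simp add: card_image card_cartesian_product)
qed

lemma projection_standard_subgroup:
  assumes "x \<in> standard_subgroup i j"
  shows "projection x \<in> torsion G (q ^ j) C"
proof -
  obtain n c where nc: "n \<in> torsion G (p ^ i) N" "c \<in> torsion G (q ^ j) C" "x = n \<otimes> c"
    using assms unfolding mem_standard_subgroup by blast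
  moreover have "n \<in> N" "c \<in> C"
    using nc(1,2) torsion_subset[of G "p ^ i" N] torsion_subset[of G "q ^ j" C] by blast+
  ultimately show ?thesis
    using projection_eq by simp
qed

lemma standard_subgroup_Int_kernel:
  assumes "x \<in> standard_subgroup i j" "x \<in> N"
  shows "x \<in> torsion G (p ^ i) N"
proof -
  obtain n c where nc: "n \<in> torsion G (p ^ i) N" "c \<in> torsion G (q ^ j) C" "x = n \<otimes> c"
    using assms(1) unfolding mem_standard_subgroup by blast
  have n: "n \<in> N" "n \<in> carrier G" and "c \<in> C"
    using nc(1,2) torsion_subset[of G "p ^ i" N] torsion_subset[of G "q ^ j" C] kernel_subset_carrier
    by blast+
  then have "c = \<one>"
    using projection_eq[of n c] projection_kernel[OF assms(2)] nc(3) by simp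
  then show ?thesis
    using nc n by simp
qed

lemma conjugate_projection_subset:
  assumes H: "subgroup H G"
  shows "\<exists>x\<in>carrier G. conjugate_set G x (projection ` H) \<subseteq> H"
proof -
  have Hc: "H \<subseteq> carrier G"
    using H subgroup.subset by blast
  obtain w where w: "w \<in> projection ` H" "projection ` H = generate G {w}"
    using complement.subgroup_eq_generate[OF subgroup_projection_image[OF H] projection_image_subset[OF H]]
    by blast
  then obtain h where h: "h \<in> H" "projection h = w"
    by blast
  have hc: "h \<in> carrier G"
    using h(1) Hc by blast
  show ?thesis
  proof (cases "h \<in> N")
    case True
    then have "projection ` H = {\<one>}"
      using w(2) h(2) projection_kernel generate_pow_on_finite_carrier[OF finite_carrier one_closed]
      by auto
    then show ?thesis
      using subgroup.one_closed[OF H] by auto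
  next
    case False
    then obtain x where x: "x \<in> carrier G" "h \<in> conjugate_set G x C"
      using mem_kernel_iff hc by blast
    from x(2) obtain c where c: "c \<in> C" "h = x \<otimes> c \<otimes> inv x"
      by (rule conjugate_setE)
    then have "w = c"
      using projection_conjugate[OF x(1)] h(2) by simp
    have wc: "w \<in> carrier G"
      using c(1) \<open>w = c\<close> complement_subset_carrier by blast
    have "conjugate_set G x (generate G {w}) \<subseteq> H"
    proof
      fix y assume "y \<in> conjugate_set G x (generate G {w})"
      then obtain k :: nat where "y = x \<otimes> w [^] k \<otimes> inv x"
        using generate_pow_on_finite_carrier[OF finite_carrier wc] by (auto elim: conjugate_setE)
      then have "y = h [^] k"
        using conjugate_nat_pow[OF x(1) wc] c(2) \<open>w = c\<close> by simp
      then show "y \<in> H"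
        using subgroup_nat_pow_closed[OF H h(1)] by simp
    qed
    then show ?thesis
      using x(1) unfolding w(2) by blast
  qed
qed

lemma subgroup_eq_conjugate_set_mult:
  assumes H: "subgroup H G" and HN: "H \<inter> N \<lhd> G" and x: "x \<in> carrier G"
    and sub: "conjugate_set G x (projection ` H) \<subseteq> H"
  shows "H = conjugate_set G x ((H \<inter> N) <#> projection ` H)"
proof (rule equalityI; rule subsetI)
  fix y assume y: "y \<in> H"
  have yc: "y \<in> carrier G"
    using y H subgroup.subset by blast
  define c where "c = projection y"
  have c: "c \<in> C" "c \<in> carrier G"
    unfolding c_def using projection_in[OF yc] complement_subset_carrier by auto
  define k where "k = x \<otimes> c \<otimes> inv x"
  have k: "k \<in> H" "k \<in> carrier G" "projection k = c"
    using sub conjugate_setI[of c "projection ` H" x] y c x projection_conjugate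
    unfolding k_def c_def by auto
  have "projection (y \<otimes> inv k) = \<one>"
    using yc k c by (simp add: projection_mult projection_inv c_def)
  moreover have "y \<otimes> inv k \<in> H"
    using y k(1) H by (simp add: subgroup.m_closed subgroup.m_inv_closed)
  ultimately have "y \<otimes> inv k \<in> H \<inter> N"
    using projection_eq_one_iff yc k(2) by simp
  then have n: "inv x \<otimes> (y \<otimes> inv k) \<otimes> inv (inv x) \<in> H \<inter> N"
    by (rule normal.inv_op_closed2[OF HN inv_closed[OF x]])
  have "y = x \<otimes> ((inv x \<otimes> (y \<otimes> inv k) \<otimes> inv (inv x)) \<otimes> c) \<otimes> inv x"
    using x yc k(2) c(2) by (simp add: k_def m_assoc)
  moreover have "(inv x \<otimes> (y \<otimes> inv k) \<otimes> inv (inv x)) \<otimes> c \<in> (H \<inter> N) <#> projection ` H"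
    using n y unfolding set_mult_def c_def by blast
  ultimately show "y \<in> conjugate_set G x ((H \<inter> N) <#> projection ` H)"
    using conjugate_setI by metis
next
  fix y assume "y \<in> conjugate_set G x ((H \<inter> N) <#> projection ` H)"
  then obtain z where z: "z \<in> (H \<inter> N) <#> projection ` H" "y = x \<otimes> z \<otimes> inv x"
    by (rule conjugate_setE)
  then obtain n c where nc: "n \<in> H \<inter> N" "c \<in> projection ` H" "y = x \<otimes> (n \<otimes> c) \<otimes> inv x"
    unfolding set_mult_def by blast
  have car: "n \<in> carrier G" "c \<in> carrier G"
    using nc(1,2) H subgroup.subset projection_in complement_subset_carrier by blast+
  have "y = (x \<otimes> n \<otimes> inv x) \<otimes> (x \<otimes> c \<otimes> inv x)"
    using nc(3) car x by (simp add: m_assoc)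
  moreover have "x \<otimes> n \<otimes> inv x \<in> H"
    using normal.inv_op_closed2[OF HN x nc(1)] by blast
  moreover have "x \<otimes> c \<otimes> inv x \<in> H"
    using sub conjugate_setI[OF nc(2)] by blast
  ultimately show "y \<in> H"
    using subgroup.m_closed[OF H] by simp
qed

lemma subgroup_classification:
  assumes H: "subgroup H G"
  shows "\<exists>i\<le>a. \<exists>j\<le>m. \<exists>x\<in>carrier G. H = conjugate_set G x (standard_subgroup i j)"
proof -
  obtain i where i: "i \<le> a" "H \<inter> N = torsion G (p ^ i) N"
    using kernel.subgroup_eq_torsion subgroups_Inter_pair[OF H subgroup_kernel] by blast
  obtain j where j: "j \<le> m" "projection ` H = torsion G (q ^ j) C"
    using complement.subgroup_eq_torsion[OF subgroup_projection_image[OF H] projection_image_subset[OF H]]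
    by blast
  obtain x where x: "x \<in> carrier G" "conjugate_set G x (projection ` H) \<subseteq> H"
    using conjugate_projection_subset[OF H] by blast
  have "H \<inter> N \<lhd> G"
    unfolding i(2) using normal_kernel_torsion[OF i(1)] .
  then have "H = conjugate_set G x ((H \<inter> N) <#> projection ` H)"
    using subgroup_eq_conjugate_set_mult[OF H _ x] by blast
  also have "\<dots> = conjugate_set G x (standard_subgroup i j)"
    unfolding standard_subgroup_def i(2) j(2) ..
  finally show ?thesis
    using i(1) j(1) x(1) by blast
qed


lemma standard_subgroup_not_self_normalizing:
  assumes i: "i \<le> a" and j: "j < m"
  shows "normalizer G (standard_subgroup i j) \<noteq> standard_subgroup i j"
proof -
  let ?P = "standard_subgroup i j"
  have "card (torsion G (q ^ j) C) \<noteq> card C"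
    using complement.card_torsion[of j] j card_complement prime_gt_1_nat[OF prime_q]
    by (simp add: power_strict_increasing)
  then have "\<not> C \<subseteq> torsion G (q ^ j) C"
    using subset_antisym[OF torsion_subset] by metis
  then obtain c where c: "c \<in> C" "c \<notin> torsion G (q ^ j) C"
    by blast
  have cc: "c \<in> carrier G"
    using c(1) complement_subset_carrier by blast
  have "conjugate_set G c ?P \<subseteq> ?P"
  proof
    fix y assume "y \<in> conjugate_set G c ?P"
    then obtain z where z: "z \<in> ?P" "y = c \<otimes> z \<otimes> inv c"
      by (rule conjugate_setE)
    then obtain n c' where nc: "n \<in> torsion G (p ^ i) N" "c' \<in> torsion G (q ^ j) C" "z = n \<otimes> c'"
      unfolding mem_standard_subgroup by blast
    have c': "c' \<in> C" "c' \<in> carrier G" and nc_car: "n \<in> carrier G"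
      using nc(1,2) torsion_subset[of G "p ^ i" N] torsion_subset[of G "q ^ j" C]
        complement_subset_carrier kernel_subset_carrier by blast+
    have "y = (c \<otimes> n \<otimes> inv c) \<otimes> (c \<otimes> c' \<otimes> inv c)"
      using z(2) nc(3) cc c'(2) nc_car by (simp add: m_assoc)
    also have "c \<otimes> c' \<otimes> inv c = c'"
      using complement.comm[OF c(1) c'(1)] cc c'(2) by (simp add: m_assoc)
    finally have "y = (c \<otimes> n \<otimes> inv c) \<otimes> c'" .
    moreover have "c \<otimes> n \<otimes> inv c \<in> torsion G (p ^ i) N"
      using normal.inv_op_closed2[OF normal_kernel_torsion[OF i] cc nc(1)] .
    ultimately show "y \<in> ?P"
      using nc(2) unfolding mem_standard_subgroup by blast
  qed
  then have "conjugate_set G c ?P = ?P"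
    using card_subset_eq[OF finite_subset[OF standard_subgroup_subset_carrier finite_carrier]]
      card_conjugate_set[OF cc standard_subgroup_subset_carrier] by blast
  then have "c \<in> normalizer G ?P"
    using mem_normalizer_iff[OF standard_subgroup_subset_carrier] cc by blast
  moreover have "c \<notin> ?P"
    using projection_standard_subgroup projection_complement[OF c(1)] c(2) by metis
  ultimately show ?thesis
    by blast
qed

lemma kernel_torsion_of_commutator:
  assumes n: "n \<in> N" and c: "c \<in> C" "c \<noteq> \<one>"
    and commutator: "n \<otimes> c \<otimes> inv n \<otimes> inv c \<in> torsion G k N"
  shows "n \<in> torsion G k N"
proof -
  define u where "u = inv n"
  define z where "z = n \<otimes> c \<otimes> inv n \<otimes> inv c"
  have car: "n \<in> carrier G" "c \<in> carrier G"
    using n c complement_subset_carrier kernel_subset_carrier by auto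
  have u: "u \<in> N" "u \<in> carrier G"
    unfolding u_def using subgroup.m_inv_closed[OF subgroup_kernel n] car by auto
  have z: "z \<in> N" "z \<in> carrier G" "z [^] k = \<one>"
    using commutator kernel_subset_carrier unfolding z_def torsion_def by auto
  have "c \<otimes> u \<otimes> inv c = u \<otimes> z"
    unfolding u_def z_def using car by (simp add: m_assoc)
  then have "c \<otimes> u [^] k \<otimes> inv c = u [^] k \<otimes> z [^] k"
    using conjugate_nat_pow[OF car(2) u(2), of k] pow_mult_distrib[OF kernel.comm[OF u(1) z(1)] u(2) z(2)]
    by simp
  then have "c \<otimes> u [^] k \<otimes> inv c = u [^] k"
    using z(3) u(2) by simp
  then have "c \<otimes> u [^] k = u [^] k \<otimes> c"
    using inv_solve_right'[of "u [^] k" "c \<otimes> u [^] k" c] car u(2) by simp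
  then have "u [^] k = \<one>"
    using fixed_point_free[OF c(1) subgroup_nat_pow_closed[OF subgroup_kernel u(1)]] c(2) by blast
  then have "n [^] k = \<one>"
    unfolding u_def using nat_pow_inv[OF car(1)] car(1) by simp
  then show ?thesis
    using n unfolding torsion_def by simp
qed

lemma complement_subset_standard_subgroup:
  assumes "i \<le> a"
  shows "C \<subseteq> standard_subgroup i m"
proof
  fix c assume c: "c \<in> C"
  have "c = \<one> \<otimes> c"
    using c complement_subset_carrier by auto
  then show "c \<in> standard_subgroup i m"
    using c subgroup.one_closed[OF kernel.subgroup_torsion[OF assms]] complement.torsion_top
    unfolding mem_standard_subgroup by auto
qed

lemma kernel_Int_normalizer_standard_subgroup:
  assumes i: "i \<le> a" and n: "n \<in> N" "n \<in> normalizer G (standard_subgroup i m)"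
  shows "n \<in> torsion G (p ^ i) N"
proof -
  let ?P = "standard_subgroup i m"
  have nc: "n \<in> carrier G"
    using n(1) kernel_subset_carrier by blast
  obtain c where c: "c \<in> C" "c \<noteq> \<one>"
    using complement_nontrivial subgroup.one_closed[OF subgroup_complement] by blast
  have cc: "c \<in> carrier G" and cP: "c \<in> ?P"
    using c(1) complement_subset_carrier complement_subset_standard_subgroup[OF i] by blast+
  have "n \<otimes> c \<otimes> inv n \<in> ?P"
    using conjugate_setI[OF cP, of n] n(2) mem_normalizer_iff[OF standard_subgroup_subset_carrier]
    by simp
  then have "n \<otimes> c \<otimes> inv n \<otimes> inv c \<in> ?P"
    using subgroup_standard_subgroup[OF i order.refl] cP
    by (simp add: subgroup.m_closed subgroup.m_inv_closed)
  moreover have "c \<otimes> inv n \<otimes> inv c \<in> N"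
    using normal.inv_op_closed2[OF normal_kernel cc subgroup.m_inv_closed[OF subgroup_kernel n(1)]] .
  then have "n \<otimes> (c \<otimes> inv n \<otimes> inv c) \<in> N"
    using subgroup.m_closed[OF subgroup_kernel n(1)] by blast
  then have "n \<otimes> c \<otimes> inv n \<otimes> inv c \<in> N"
    using nc cc by (simp add: m_assoc)
  ultimately have "n \<otimes> c \<otimes> inv n \<otimes> inv c \<in> torsion G (p ^ i) N"
    by (rule standard_subgroup_Int_kernel)
  then show ?thesis
    by (rule kernel_torsion_of_commutator[OF n(1) c])
qed

lemma standard_subgroup_self_normalizing:
  assumes i: "i \<le> a"
  shows "normalizer G (standard_subgroup i m) = standard_subgroup i m"
proof
  let ?P = "standard_subgroup i m"
  have P_norm: "?P \<subseteq> normalizer G ?P"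
    using subgroup_subset_normalizer[OF subgroup_standard_subgroup[OF i order.refl]] .
  then show "?P \<subseteq> normalizer G ?P" .
  show "normalizer G ?P \<subseteq> ?P"
  proof
    fix g assume g: "g \<in> normalizer G ?P"
    have norm: "subgroup (normalizer G ?P) G"
      using normalizer_imp_subgroup[OF standard_subgroup_subset_carrier] .
    obtain n c where nc: "n \<in> N" "c \<in> C" "g = n \<otimes> c"
      using kernel_complement_decomposition g norm subgroup.subset by blast
    have "n = g \<otimes> inv c"
      using nc kernel_subset_carrier complement_subset_carrier by (simp add: m_assoc subsetD)
    moreover have "inv c \<in> normalizer G ?P"
      using P_norm complement_subset_standard_subgroup[OF i] nc(2) subgroup.m_inv_closed[OF norm]
      by blast
    ultimately have "n \<in> normalizer G ?P"
      using g subgroup.m_closed[OF norm] by simp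
    then have "n \<in> torsion G (p ^ i) N"
      using kernel_Int_normalizer_standard_subgroup[OF i nc(1)] by blast
    then show "g \<in> ?P"
      using nc(2,3) complement.torsion_top unfolding mem_standard_subgroup by auto
  qed
qed

lemma standard_subgroup_eq_one_iff:
  assumes "i \<le> a" "j \<le> m"
  shows "standard_subgroup i j = {\<one>} \<longleftrightarrow> i = 0 \<and> j = 0"
proof
  assume "standard_subgroup i j = {\<one>}"
  then have "p ^ i * q ^ j = p ^ 0 * q ^ 0"
    using card_standard_subgroup[OF assms] by simp
  then show "i = 0 \<and> j = 0"
    using prime_power_product_inj[OF prime_p prime_q primes_distinct] by blast
next
  assume "i = 0 \<and> j = 0"
  then have "card (standard_subgroup i j) = 1"
    using card_standard_subgroup[OF assms] by simp
  moreover have "\<one> \<in> standard_subgroup i j"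
    using subgroup.one_closed[OF subgroup_standard_subgroup[OF assms]] .
  ultimately show "standard_subgroup i j = {\<one>}"
    by (metis card_1_singletonE singletonD)
qed

lemma non_self_normalizing_standard_subgroup_iff:
  assumes "i \<le> a" "j \<le> m"
  shows "standard_subgroup i j \<noteq> {\<one>} \<and> normalizer G (standard_subgroup i j) \<noteq> standard_subgroup i j
    \<longleftrightarrow> (i, j) \<noteq> (0, 0) \<and> j < m"
  using standard_subgroup_eq_one_iff[OF assms] assms
    standard_subgroup_self_normalizing standard_subgroup_not_self_normalizing
  by (cases "j = m") auto

lemma subgroup_conj_class_standard_subgroup_inj:
  assumes "i \<le> a" "j \<le> m" "i' \<le> a" "j' \<le> m"
    and "subgroup_conj_class G (standard_subgroup i j) = subgroup_conj_class G (standard_subgroup i' j')"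
  shows "i = i' \<and> j = j'"
proof -
  have "p ^ i * q ^ j = p ^ i' * q ^ j'"
    using card_eq_if_subgroup_conj_class_eq[OF standard_subgroup_subset_carrier
        standard_subgroup_subset_carrier assms(5)] card_standard_subgroup assms(1-4) by simp
  then show ?thesis
    by (rule prime_power_product_inj[OF prime_p prime_q primes_distinct])
qed

lemma subgroup_conj_class_non_self_normalizing:
  "subgroup_conj_class G ` {H. subgroup H G \<and> H \<noteq> {\<one>} \<and> normalizer G H \<noteq> H}
    = (\<lambda>(i, j). subgroup_conj_class G (standard_subgroup i j)) ` ({..a} \<times> {..<m} - {(0, 0)})"
  (is "subgroup_conj_class G ` ?D = ?cls ` ?T")
proof (rule equalityI; rule subsetI)
  fix Y assume "Y \<in> subgroup_conj_class G ` ?D"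
  then obtain H where H: "H \<in> ?D" "Y = subgroup_conj_class G H"
    by blast
  then obtain i j x where ijx: "i \<le> a" "j \<le> m" "x \<in> carrier G"
    "H = conjugate_set G x (standard_subgroup i j)"
    using subgroup_classification by blast
  have "standard_subgroup i j \<noteq> {\<one>} \<and> normalizer G (standard_subgroup i j) \<noteq> standard_subgroup i j"
    using H(1) ijx(3,4) self_normalizing_conjugate_set_iff[OF standard_subgroup_subset_carrier ijx(3)]
      conjugate_set_eq_iff[OF ijx(3) standard_subgroup_subset_carrier, of "{\<one>}"]
      conjugate_set_singleton_one[OF ijx(3)]
    by auto
  then have "(i, j) \<in> ?T"
    using non_self_normalizing_standard_subgroup_iff[OF ijx(1,2)] ijx(1) by auto
  moreover have "Y = ?cls (i, j)"
    using H(2) ijx(3,4) subgroup_conj_class_conjugate_set[OF standard_subgroup_subset_carrier]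
    by simp
  ultimately show "Y \<in> ?cls ` ?T"
    by blast
next
  fix Y assume "Y \<in> ?cls ` ?T"
  then obtain u where u: "u \<in> ?T" "Y = ?cls u"
    by blast
  obtain i j where "u = (i, j)"
    by fastforce
  then show "Y \<in> subgroup_conj_class G ` ?D"
    using u non_self_normalizing_standard_subgroup_iff[of i j] subgroup_standard_subgroup[of i j]
    by auto
qed

lemma D_count_eq: "D_count G = (a + 1) * m - 1"
proof -
  let ?T = "{..a} \<times> {..<m} - {(0::nat, 0::nat)}"
  have "inj_on (\<lambda>(i, j). subgroup_conj_class G (standard_subgroup i j)) ?T"
  proof (rule inj_onI)
    fix u v assume uv: "u \<in> ?T" "v \<in> ?T"
      "(\<lambda>(i, j). subgroup_conj_class G (standard_subgroup i j)) u
        = (\<lambda>(i, j). subgroup_conj_class G (standard_subgroup i j)) v"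
    obtain i j i' j' where ij: "u = (i, j)" "v = (i', j')"
      by fastforce
    show "u = v"
      using subgroup_conj_class_standard_subgroup_inj[of i j i' j'] uv unfolding ij by auto
  qed
  then have "D_count G = card ?T"
    unfolding D_count_def subgroup_conj_class_non_self_normalizing by (rule card_image)
  also have "\<dots> = (a + 1) * m - 1"
    using m_pos by (simp add: card_cartesian_product card_Diff_singleton)
  finally show ?thesis .
qed

end

theorem mainTheorem8:
  fixes G (structure) and C N :: "'a set" and p q a m :: nat
  assumes "group G" and "finite (carrier G)"
    and "frobenius_complement G C"
    and "N = frobenius_kernel G C"
    and "cyclic_group (G\<lparr>carrier := N\<rparr>)" and "card N = p ^ a"
    and "cyclic_group (G\<lparr>carrier := C\<rparr>)" and "card C = q ^ m"
    and "Factorial_Ring.prime p" and "Factorial_Ring.prime q" and "a \<ge> 1" and "m \<ge> 1"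
  shows "D_count G = (a + 1) * m - 1"
proof -
  have "N \<subseteq> carrier G"
    using assms(4) monoid.one_closed[OF group.is_monoid[OF assms(1)]]
    unfolding frobenius_kernel_def by blast
  then have "subgroup N G"
    using group.subgroup_if_cyclic_group[OF assms(1,2) _ assms(5)] by blast
  then interpret cyclic_frobenius G C N p q a m
    using assms
    by (simp add: cyclic_frobenius_def cyclic_frobenius_axioms_def frobenius_group_def
        frobenius_group_axioms_def)
  show ?thesis
    by (rule D_count_eq)
qed

end
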